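(* Let $n\ge2$ and let $X_1,\dots,X_n$ be operators in a complex Hilbert space $\mathcal{H}$, each Hermitian or skew-Hermitian, defined on a common invariant domain $D$. Let $m$ be a sequence of positive numbers satisfying (A0), (A1), (A2) and (A3'): there is $L\ge1$ with $p\,m_{p-1}\le L\,m_p$ for all $p\ge1$; set $m^{(1)}=\dots=m^{(n)}=m$, $\mathbf{m}=(m,\dots,m)$ ($n$ entries), $\mathbf{m}'=(m,\dots,m)$ ($n-1$ entries), $\mathbf{X}=(X_1,\dots,X_n)$, $\mathbf{X}'=(X_1,\dots,X_{n-1})$. If $[X_j,X_n]\in\mathrm{span}\{X_1,\dots,X_n\}$ (on $D$) for every $j\in\{1,\dots,n-1\}$, then $u\in D$ belongs to $\mathcal{S}_{\mathbf{m}}(\mathbf{X})$ if and only if $u\in\mathcal{S}_{\mathbf{m}'}(\mathbf{X}')\cap\mathcal{S}_m(X_n)$.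
   Context: A common invariant domain $D$ means $D\subset\mathrm{Dom}(X_j)$ and $X_jD\subset D$ for all $j$. Notation: for $N\ge1$, $M(N)=\bigcup_{k\ge1}\{1,\dots,N\}^k$; for $\alpha=(i_1,\dots,i_k)$, $|\alpha|=k$, $|\alpha|_j=\mathrm{card}\{l:i_l=j\}$. For operators $\mathbf{Y}=(Y_1,\dots,Y_N)$, $\mathbf{Y}_\alpha=Y_{i_1}\cdots Y_{i_k}$ and $C^\infty(\mathbf{Y})=\{u: u\in\mathrm{Dom}(\mathbf{Y}_\alpha)\ \forall\alpha\in M(N)\}$. For sequences $\mathbf{p}=(p^{(1)},\dots,p^{(N)})$, $\mathbf{p}_\alpha=p^{(1)}_{|\alpha|_1}\cdots p^{(N)}_{|\alpha|_N}$ and $\mathcal{S}_{\mathbf{p}}(\mathbf{Y})=\{u\in C^\infty(\mathbf{Y}):\exists A,C>0,\ \|\mathbf{Y}_\alpha u\|\le CA^{|\alpha|}\mathbf{p}_\alpha\ \forall\alpha\in M(N)\}$ (for a single operator $Y$ and sequence $m$: $\|Y^ku\|\le CA^km_k$ for all $k\ge1$). Conditions: (A0) $m_0=m_1=1$; (A1) $m_p^2\le m_{p-1}m_{p+1}$ for $p\ge1$; (A2) there is $H>0$ with $m_{p+q}\le H^{p+q}m_pm_q$ for all $p,q\in\mathbb{N}$. *)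

theory Defs
  imports "HOL-Analysis.Analysis"
begin

class complex_inner = real_normed_vector +
  fixes scaleC :: "complex \<Rightarrow> 'a \<Rightarrow> 'a" (infixr \<open>*\<^sub>C\<close> 75)
    and cinner :: "'a \<Rightarrow> 'a \<Rightarrow> complex"
  assumes scaleC_add_right: "a *\<^sub>C (x + y) = a *\<^sub>C x + a *\<^sub>C y"
    and scaleC_add_left: "(a + b) *\<^sub>C x = a *\<^sub>C x + b *\<^sub>C x"
    and scaleC_scaleC: "a *\<^sub>C (b *\<^sub>C x) = (a * b) *\<^sub>C x"
    and scaleC_one: "1 *\<^sub>C x = x"
    and scaleR_scaleC: "scaleR r x = complex_of_real r *\<^sub>C x"
    and cinner_commute: "cinner x y = cnj (cinner y x)"
    and cinner_add_left: "cinner (x + y) z = cinner x z + cinner y z"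
    and cinner_scaleC_left: "cinner (a *\<^sub>C x) y = cnj a * cinner x y"
    and cinner_self_norm: "cinner x x = complex_of_real ((norm x)\<^sup>2)"

class chilbert_space = complex_inner + complete_space

fun opword :: "(nat \<Rightarrow> 'a \<Rightarrow> 'a) \<Rightarrow> nat list \<Rightarrow> 'a \<Rightarrow> 'a" where
  "opword Y [] u = u"
| "opword Y (i # is) u = Y i (opword Y is u)"

definition multi_indices :: "nat \<Rightarrow> nat list set" where
  "multi_indices N = {\<alpha>. \<alpha> \<noteq> [] \<and> set \<alpha> \<subseteq> {1..N}}"

definition seq_weight :: "nat \<Rightarrow> (nat \<Rightarrow> nat \<Rightarrow> real) \<Rightarrow> nat list \<Rightarrow> real" where
  "seq_weight N p \<alpha> = (\<Prod>j=1..N. p j (count_list \<alpha> j))"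

text \<open>S_p(Y) for Y = (Y 1, ..., Y N), restricted to vectors in a common invariant
  domain (so that the C^\<infinity> condition is automatic).\<close>
definition S_class :: "nat \<Rightarrow> (nat \<Rightarrow> 'a::real_normed_vector \<Rightarrow> 'a) \<Rightarrow> (nat \<Rightarrow> nat \<Rightarrow> real) \<Rightarrow> 'a set" where
  "S_class N Y p = {u. \<exists>A>0. \<exists>C>0. \<forall>\<alpha>\<in>multi_indices N.
      norm (opword Y \<alpha> u) \<le> C * A ^ length \<alpha> * seq_weight N p \<alpha>}"

definition S_single :: "('a::real_normed_vector \<Rightarrow> 'a) \<Rightarrow> (nat \<Rightarrow> real) \<Rightarrow> 'a set" where
  "S_single Y m = {u. \<exists>A>0. \<exists>C>0. \<forall>k\<ge>1. norm ((Y ^^ k) u) \<le> C * A ^ k * m k}"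

definition complex_subspace :: "'a::complex_inner set \<Rightarrow> bool" where
  "complex_subspace D \<longleftrightarrow> 0 \<in> D \<and> (\<forall>x\<in>D. \<forall>y\<in>D. x + y \<in> D) \<and> (\<forall>c. \<forall>x\<in>D. c *\<^sub>C x \<in> D)"

definition linear_on :: "'a::complex_inner set \<Rightarrow> ('a \<Rightarrow> 'a) \<Rightarrow> bool" where
  "linear_on D X \<longleftrightarrow> (\<forall>x\<in>D. \<forall>y\<in>D. X (x + y) = X x + X y) \<and> (\<forall>c. \<forall>x\<in>D. X (c *\<^sub>C x) = c *\<^sub>C X x)"

definition hermitian_on :: "'a::complex_inner set \<Rightarrow> ('a \<Rightarrow> 'a) \<Rightarrow> bool" where
  "hermitian_on D X \<longleftrightarrow> (\<forall>x\<in>D. \<forall>y\<in>D. cinner (X x) y = cinner x (X y))"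

definition skew_hermitian_on :: "'a::complex_inner set \<Rightarrow> ('a \<Rightarrow> 'a) \<Rightarrow> bool" where
  "skew_hermitian_on D X \<longleftrightarrow> (\<forall>x\<in>D. \<forall>y\<in>D. cinner (X x) y = - cinner x (X y))"

end

theory Submission
  imports Defs
begin

text \<open>Because each \<open>X j\<close> is Hermitian or skew-Hermitian,
  \<open>\<parallel>X\<^sub>\<alpha> u\<parallel>\<^sup>2 = |\<langle>u, X\<^sub>r\<^sub>e\<^sub>v \<^sub>\<alpha> X\<^sub>\<alpha> u\<rangle>|\<close>. On \<open>D\<close> the commutation relations rewrite
  \<open>X\<^sub>r\<^sub>e\<^sub>v \<^sub>\<alpha> X\<^sub>\<alpha>\<close> as a linear combination of normally ordered words \<open>X\<^sub>n\<^sup>k X\<^sub>\<beta>\<close> with \<open>\<beta>\<close>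
  over \<open>{1..n-1}\<close>: commuting one \<open>X j\<close> past \<open>X\<^sub>n\<^sup>k\<close> creates a binomial sum of lower powers
  of \<open>X\<^sub>n\<close>, whose total weight (A3') bounds by \<open>exp (\<kappa> L)\<close> times the weight of the word.
  Each ordered term is then bounded by Cauchy--Schwarz,
  \<open>|\<langle>X\<^sub>n\<^sup>k u, X\<^sub>\<beta> u\<rangle>| \<le> \<parallel>X\<^sub>n\<^sup>k u\<parallel> \<parallel>X\<^sub>\<beta> u\<parallel>\<close>, which the two hypotheses control;
  (A1) and (A2) convert between the weight \<open>m\<^sub>|\<^sub>\<alpha>\<^sub>|\<close> and the product weight \<open>\<^bold>m\<^sub>\<alpha>\<close>.\<close>

section \<open>Complex inner product spaces\<close>

lemma scaleC_zero_left [simp]: "(0::complex) *\<^sub>C (x::'a::complex_inner) = 0"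
proof -
  have "(0::complex) *\<^sub>C x = 0 *\<^sub>C x + 0 *\<^sub>C x"
    by (metis add_0 scaleC_add_left)
  then show ?thesis by simp
qed

lemma scaleC_zero_right [simp]: "c *\<^sub>C (0::'a::complex_inner) = 0"
proof -
  have "c *\<^sub>C (0::'a) = c *\<^sub>C 0 + c *\<^sub>C 0"
    by (metis add_0 scaleC_add_right)
  then show ?thesis by simp
qed

lemma scaleC_sum_right: "c *\<^sub>C (\<Sum>i\<in>I. f i) = (\<Sum>i\<in>I. c *\<^sub>C (f i :: 'a::complex_inner))"
  by (induction I rule: infinite_finite_induct) (auto simp: scaleC_add_right)

lemma scaleC_sum_left: "(\<Sum>i\<in>I. f i) *\<^sub>C (x::'a::complex_inner) = (\<Sum>i\<in>I. f i *\<^sub>C x)"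
  by (induction I rule: infinite_finite_induct) (auto simp: scaleC_add_left)

lemma cinner_zero_left [simp]: "cinner 0 (y::'a::complex_inner) = 0"
  using cinner_add_left[of 0 0 y] by simp

lemma cinner_zero_right [simp]: "cinner (y::'a::complex_inner) 0 = 0"
  using cinner_commute[of y 0] by simp

lemma cinner_add_right: "cinner (x::'a::complex_inner) (y + z) = cinner x y + cinner x z"
  using cinner_commute[of x "y+z"] cinner_commute[of x y] cinner_commute[of x z]
    cinner_add_left[of y z x]
  by simp

lemma cinner_scaleC_right: "cinner (x::'a::complex_inner) (a *\<^sub>C y) = a * cinner x y"
  using cinner_commute[of x "a *\<^sub>C y"] cinner_commute[of x y] cinner_scaleC_left[of a y x]
  by simp

lemma cinner_Cauchy_Schwarz: "cmod (cinner (x::'a::complex_inner) y) \<le> norm x * norm y"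
proof (cases "y = 0")
  case True then show ?thesis by simp
next
  case False
  define r where "r = (norm y)\<^sup>2"
  define z where "z = cinner y x"
  have r: "r > 0" using False by (simp add: r_def)
  \<comment> \<open>expand \<open>\<parallel>x - t y\<parallel>\<^sup>2 \<ge> 0\<close> at the minimizing \<open>t = \<langle>y,x\<rangle> / \<parallel>y\<parallel>\<^sup>2\<close>\<close>
  define v where "v = x + (- (z / r)) *\<^sub>C y"
  have xy: "cinner x y = cnj z" using cinner_commute[of x y] by (simp add: z_def)
  have yy: "cinner y y = r" by (simp add: r_def cinner_self_norm)
  have "cinner v v = cinner x x - cnj (z / r) * z - z / r * cnj z + cnj (z / r) * (z / r) * r"
    unfolding v_def cinner_add_left cinner_add_right cinner_scaleC_left cinner_scaleC_right
    by (simp add: xy yy z_def[symmetric] algebra_simps)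
  also have "\<dots> = cinner x x - cnj z * z / r"
    using r by (simp add: field_simps power2_eq_square)
  also have "\<dots> = complex_of_real ((norm x)\<^sup>2 - (cmod z)\<^sup>2 / r)"
    using complex_norm_square[of z] by (simp add: cinner_self_norm mult.commute)
  finally have "(norm v)\<^sup>2 = (norm x)\<^sup>2 - (cmod z)\<^sup>2 / r"
    by (metis cinner_self_norm of_real_eq_iff)
  then have "(cmod z)\<^sup>2 / r \<le> (norm x)\<^sup>2"
    by (metis diff_ge_0_iff_ge zero_le_power2)
  then have "(cmod z)\<^sup>2 \<le> (norm x * norm y)\<^sup>2"
    using r by (simp add: r_def power_mult_distrib pos_divide_le_eq)
  then have "cmod z \<le> norm x * norm y"
    by (rule power2_le_imp_le) simp
  then show ?thesis
    by (metis z_def cinner_commute complex_mod_cnj)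
qed

section \<open>Weight sequences\<close>

lemma log_convex_ratio_mono:
  fixes m :: "nat \<Rightarrow> real"
  assumes pos: "\<forall>k. m k > 0" and A1: "\<forall>p\<ge>1. (m p)\<^sup>2 \<le> m (p - 1) * m (p + 1)"
  shows "i \<le> j \<Longrightarrow> m (Suc i) / m i \<le> m (Suc j) / m j"
proof (induction j rule: dec_induct)
  case (step j)
  have "(m (Suc j))\<^sup>2 \<le> m j * m (Suc (Suc j))" using A1[rule_format, of "Suc j"] by simp
  then have "m (Suc j) / m j \<le> m (Suc (Suc j)) / m (Suc j)"
    using pos[rule_format, of j] pos[rule_format, of "Suc j"]
    by (simp add: divide_le_eq le_divide_eq power2_eq_square mult.commute)
  then show ?case using step by linarith
qed simp

lemma log_convex_mult_le:
  fixes m :: "nat \<Rightarrow> real"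
  assumes pos: "\<forall>k. m k > 0" and A1: "\<forall>p\<ge>1. (m p)\<^sup>2 \<le> m (p - 1) * m (p + 1)" and m0: "m 0 = 1"
  shows "m p * m q \<le> m (p + q)"
proof (induction q)
  case 0 then show ?case by (simp add: m0)
next
  case (Suc q)
  have ratio: "m (Suc q) / m q \<le> m (Suc (p + q)) / m (p + q)"
    by (rule log_convex_ratio_mono[OF pos A1]) simp
  have "m p * m (Suc q) = m p * m q * (m (Suc q) / m q)" using pos[rule_format, of q] by simp
  also have "\<dots> \<le> m (p + q) * (m (Suc (p + q)) / m (p + q))"
    using Suc ratio pos by (intro mult_mono) (auto intro: less_imp_le)
  also have "\<dots> = m (Suc (p + q))" using pos[rule_format, of "p + q"] by simp
  finally show ?case by simp
qed

lemma log_convex_prod_le: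
  fixes m :: "nat \<Rightarrow> real"
  assumes pos: "\<forall>k. m k > 0" and A1: "\<forall>p\<ge>1. (m p)\<^sup>2 \<le> m (p - 1) * m (p + 1)" and m0: "m 0 = 1"
  shows "finite J \<Longrightarrow> (\<Prod>j\<in>J. m (f j)) \<le> m (\<Sum>j\<in>J. f j)"
proof (induction J rule: finite_induct)
  case empty then show ?case by (simp add: m0)
next
  case (insert a J)
  have "(\<Prod>j\<in>insert a J. m (f j)) = m (f a) * (\<Prod>j\<in>J. m (f j))" using insert by simp
  also have "\<dots> \<le> m (f a) * m (\<Sum>j\<in>J. f j)"
    using insert pos by (intro mult_left_mono) (auto intro: less_imp_le)
  also have "\<dots> \<le> m (f a + (\<Sum>j\<in>J. f j))" by (rule log_convex_mult_le[OF pos A1 m0])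
  finally show ?case using insert by simp
qed

lemma moderate_growth_one_le:
  fixes m :: "nat \<Rightarrow> real"
  assumes pos: "\<forall>k. m k > 0" and "\<exists>H>0. \<forall>p q. m (p + q) \<le> H ^ (p + q) * m p * m q"
  obtains H where "H \<ge> 1" "\<forall>p q. m (p + q) \<le> H ^ (p + q) * m p * m q"
proof -
  obtain H where H: "H > 0" "\<forall>p q. m (p + q) \<le> H ^ (p + q) * m p * m q"
    using assms(2) by blast
  have "m (p + q) \<le> max H 1 ^ (p + q) * m p * m q" for p q
  proof -
    have "H ^ (p + q) * (m p * m q) \<le> max H 1 ^ (p + q) * (m p * m q)"
      using H(1) pos by (intro mult_right_mono power_mono) (auto intro: less_imp_le)
    then show ?thesis
      using H(2)[rule_format, of p q] by (simp only: mult.assoc)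
  qed
  then show ?thesis using that[of "max H 1"] by simp
qed

lemma moderate_growth_le_prod:
  fixes m :: "nat \<Rightarrow> real"
  assumes pos: "\<forall>k. m k > 0" and H: "H \<ge> 1" and A2: "\<forall>p q. m (p + q) \<le> H ^ (p + q) * m p * m q"
    and m0: "m 0 = 1"
  shows "finite J \<Longrightarrow> m (\<Sum>j\<in>J. f j) \<le> H ^ (card J * (\<Sum>j\<in>J. f j)) * (\<Prod>j\<in>J. m (f j))"
proof (induction J rule: finite_induct)
  case empty then show ?case by (simp add: m0)
next
  case (insert a J)
  define S where "S = (\<Sum>j\<in>J. f j)"
  define P where "P = (\<Prod>j\<in>J. m (f j))"
  have P: "P \<ge> 0" unfolding P_def using pos by (auto intro: prod_nonneg less_imp_le)
  have "m (\<Sum>j\<in>insert a J. f j) = m (f a + S)" using insert by (simp add: S_def)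
  also have "\<dots> \<le> H ^ (f a + S) * m (f a) * m S" using A2 by blast
  also have "\<dots> \<le> H ^ (f a + S) * m (f a) * (H ^ (card J * S) * P)"
    using insert pos H by (intro mult_left_mono) (auto simp: S_def P_def intro: less_imp_le)
  also have "\<dots> = H ^ (f a + S + card J * S) * m (f a) * P" by (simp add: power_add)
  also have "\<dots> \<le> H ^ (Suc (card J) * (f a + S)) * m (f a) * P"
    using H P pos[rule_format, of "f a"]
    by (intro mult_right_mono power_increasing) (auto simp: algebra_simps)
  finally show ?case using insert by (simp add: S_def P_def mult.assoc)
qed

lemma A3_scaled:
  fixes m :: "nat \<Rightarrow> real"
  assumes pos: "\<forall>k. m k > 0" and A: "A \<ge> 1" and L: "L \<ge> 0"
    and A3: "\<forall>p\<ge>1. real p * m (p - 1) \<le> L * m p"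
  shows "\<forall>p\<ge>1. real p * (A ^ (p - 1) * m (p - 1)) \<le> L * (A ^ p * m p)"
proof (intro allI impI)
  fix p :: nat assume p: "p \<ge> 1"
  have "real p * (A ^ (p - 1) * m (p - 1)) = A ^ (p - 1) * (real p * m (p - 1))" by simp
  also have "\<dots> \<le> A ^ (p - 1) * (L * m p)" using A3 p A by (intro mult_left_mono) auto
  also have "\<dots> \<le> A ^ p * (L * m p)"
    using A L pos[rule_format, of p] by (intro mult_right_mono power_increasing) auto
  finally show "real p * (A ^ (p - 1) * m (p - 1)) \<le> L * (A ^ p * m p)" by (simp add: mult_ac)
qed

lemma A3_iterate:
  fixes m :: "nat \<Rightarrow> real"
  assumes L: "L \<ge> 1" and A3: "\<forall>p\<ge>1. real p * m (p - 1) \<le> L * m p"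
  shows "i \<le> M \<Longrightarrow> fact M * m (M - i) \<le> L ^ i * fact (M - i) * m M"
proof (induction i)
  case 0 then show ?case by simp
next
  case (Suc i)
  define q where "q = M - Suc i"
  have Mi: "M - i = Suc q" using Suc by (simp add: q_def)
  have "fact M * m (M - Suc i) * real (Suc q) = fact M * (real (Suc q) * m q)" by (simp add: q_def)
  also have "\<dots> \<le> fact M * (L * m (Suc q))"
    using A3[rule_format, of "Suc q"] by (intro mult_left_mono) auto
  also have "\<dots> = L * (fact M * m (M - i))" using Mi by simp
  also have "\<dots> \<le> L * (L ^ i * fact (M - i) * m M)" using Suc L by (intro mult_left_mono) auto
  also have "\<dots> = L ^ Suc i * fact (M - Suc i) * m M * real (Suc q)"
    using Mi by (simp add: q_def algebra_simps)
  finally show ?case by simp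
qed

text \<open>The recurrence \<open>binomial_shift_sum_Suc\<close> mirrors
  \<open>(\<Sum> a\<^sub>r X\<^sub>r) X\<^sub>n\<^sup>k\<^sup>+\<^sup>1 = X\<^sub>n (\<Sum> a\<^sub>r X\<^sub>r) X\<^sub>n\<^sup>k + (\<Sum> (T a)\<^sub>r X\<^sub>r) X\<^sub>n\<^sup>k\<close>, where \<open>\<kappa>\<close> bounds the
  growth of the coefficients under the commutator map \<open>T\<close> (\<open>comm_coeffs\<close> below).\<close>

definition binomial_shift_sum :: "(nat \<Rightarrow> real) \<Rightarrow> real \<Rightarrow> nat \<Rightarrow> nat \<Rightarrow> real" where
  "binomial_shift_sum m \<kappa> k M = (\<Sum>i\<le>k. real (k choose i) * \<kappa> ^ i * m (M - i))"

lemma binomial_shift_sum_0 [simp]: "binomial_shift_sum m \<kappa> 0 M = m M"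
  by (simp add: binomial_shift_sum_def)

lemma binomial_shift_sum_nonneg: "\<forall>k. m k \<ge> 0 \<Longrightarrow> \<kappa> \<ge> 0 \<Longrightarrow> binomial_shift_sum m \<kappa> k M \<ge> 0"
  unfolding binomial_shift_sum_def by (intro sum_nonneg mult_nonneg_nonneg) auto

lemma binomial_shift_sum_Suc:
  "binomial_shift_sum m \<kappa> (Suc k) (Suc M) = binomial_shift_sum m \<kappa> k (Suc M) + \<kappa> * binomial_shift_sum m \<kappa> k M"
proof -
  define t where "t j = real (k choose Suc j) * \<kappa> ^ Suc j * m (M - j)" for j
  have "binomial_shift_sum m \<kappa> (Suc k) (Suc M)
      = m (Suc M) + (\<Sum>j\<le>k. real (Suc k choose Suc j) * \<kappa> ^ Suc j * m (M - j))"
    unfolding binomial_shift_sum_def by (subst sum.atMost_Suc_shift) simp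
  also have "\<dots> = m (Suc M) + (\<Sum>j\<le>k. t j) + (\<Sum>j\<le>k. real (k choose j) * \<kappa> ^ Suc j * m (M - j))"
    by (simp add: t_def sum.distrib[symmetric] algebra_simps)
  also have "m (Suc M) + (\<Sum>j\<le>k. t j) = binomial_shift_sum m \<kappa> k (Suc M)"
  proof -
    have "binomial_shift_sum m \<kappa> k (Suc M) = (\<Sum>i\<le>Suc k. real (k choose i) * \<kappa> ^ i * m (Suc M - i))"
      unfolding binomial_shift_sum_def by simp
    also have "\<dots> = m (Suc M) + (\<Sum>j\<le>k. t j)"
      unfolding t_def by (subst sum.atMost_Suc_shift) simp
    finally show ?thesis by simp
  qed
  also have "(\<Sum>j\<le>k. real (k choose j) * \<kappa> ^ Suc j * m (M - j)) = \<kappa> * binomial_shift_sum m \<kappa> k M"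
    unfolding binomial_shift_sum_def by (simp add: sum_distrib_left algebra_simps)
  finally show ?thesis .
qed

lemma binomial_shift_sum_le_exp:
  fixes m :: "nat \<Rightarrow> real"
  assumes pos: "\<forall>k. m k > 0" and L: "L \<ge> 1" and A3: "\<forall>p\<ge>1. real p * m (p - 1) \<le> L * m p"
    and \<kappa>: "\<kappa> \<ge> 0" and kM: "k \<le> M"
  shows "binomial_shift_sum m \<kappa> k M \<le> exp (\<kappa> * L) * m M"
proof -
  have term_le: "real (k choose i) * \<kappa> ^ i * m (M - i) \<le> (\<kappa> * L) ^ i / fact i * m M"
    if i: "i \<le> k" for i
  proof -
    have iM: "i \<le> M" using i kM by simp
    have "fact i * real (M choose i) = fact M / fact (M - i)" by (rule fact_binomial[OF iM])
    then have "real (M choose i) * m (M - i) = fact M * m (M - i) / (fact i * fact (M - i))"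
      by (simp add: field_simps)
    also have "\<dots> \<le> L ^ i * fact (M - i) * m M / (fact i * fact (M - i))"
      using A3_iterate[OF L A3 iM] by (intro divide_right_mono) auto
    also have "\<dots> = L ^ i / fact i * m M" by simp
    finally have M_choose: "real (M choose i) * m (M - i) \<le> L ^ i / fact i * m M" .
    have "real (k choose i) * \<kappa> ^ i * m (M - i) \<le> \<kappa> ^ i * (real (M choose i) * m (M - i))"
      using binomial_right_mono[OF kM, of i] pos \<kappa>
      by (simp add: mult.commute mult_left_mono mult_right_mono less_imp_le)
    also have "\<dots> \<le> \<kappa> ^ i * (L ^ i / fact i * m M)"
      using M_choose \<kappa> by (intro mult_left_mono) auto
    finally show ?thesis by (simp add: power_mult_distrib)
  qed
  have exp_partial: "(\<Sum>i\<le>k. (\<kappa> * L) ^ i / fact i) \<le> exp (\<kappa> * L)"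
  proof -
    have "(\<Sum>i\<le>k. (\<kappa> * L) ^ i / fact i) = (\<Sum>i<Suc k. inverse (fact i) * (\<kappa> * L) ^ i)"
      by (simp add: lessThan_Suc_atMost divide_inverse mult.commute)
    also have "\<dots> \<le> (\<Sum>i. inverse (fact i) * (\<kappa> * L) ^ i)"
      using \<kappa> L by (intro sum_le_suminf[OF summable_exp]) auto
    also have "\<dots> = exp (\<kappa> * L)" by (simp add: exp_def scaleR_conv_of_real field_simps)
    finally show ?thesis .
  qed
  have "binomial_shift_sum m \<kappa> k M \<le> (\<Sum>i\<le>k. (\<kappa> * L) ^ i / fact i * m M)"
    unfolding binomial_shift_sum_def by (intro sum_mono term_le) auto
  also have "\<dots> = (\<Sum>i\<le>k. (\<kappa> * L) ^ i / fact i) * m M"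
    by (rule sum_distrib_right[symmetric])
  also have "\<dots> \<le> exp (\<kappa> * L) * m M"
    using exp_partial pos by (intro mult_right_mono) (auto intro: less_imp_le)
  finally show ?thesis .
qed

lemma seq_weight_nonneg: "\<forall>k. m k \<ge> 0 \<Longrightarrow> seq_weight N (\<lambda>_. m) \<alpha> \<ge> 0"
  unfolding seq_weight_def by (intro prod_nonneg) auto

lemma seq_weight_Suc:
  "seq_weight (Suc N) p \<alpha> = seq_weight N p \<alpha> * p (Suc N) (count_list \<alpha> (Suc N))"
  by (simp add: seq_weight_def)

lemma seq_weight_replicate:
  assumes "j \<in> {1..N}" and "m 0 = 1"
  shows "seq_weight N (\<lambda>_. m) (replicate k j) = m k"
proof -
  have "count_list (replicate k j) i = (if i = j then k else 0)" for i
    by (induction k) auto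
  then have "seq_weight N (\<lambda>_. m) (replicate k j) = (\<Prod>i\<in>{1..N}. if i = j then m k else 1)"
    unfolding seq_weight_def using assms(2) by (intro prod.cong) auto
  then show ?thesis using assms(1) by simp
qed

lemma seq_weight_le_length:
  fixes m :: "nat \<Rightarrow> real"
  assumes "\<forall>k. m k > 0" "\<forall>p\<ge>1. (m p)\<^sup>2 \<le> m (p - 1) * m (p + 1)" "m 0 = 1"
    and "set \<alpha> \<subseteq> {1..N}"
  shows "seq_weight N (\<lambda>_. m) \<alpha> \<le> m (length \<alpha>)"
proof -
  have "seq_weight N (\<lambda>_. m) \<alpha> \<le> m (\<Sum>j\<in>{1..N}. count_list \<alpha> j)"
    unfolding seq_weight_def by (rule log_convex_prod_le[OF assms(1-3)]) simp
  then show ?thesis using assms(4) by (simp add: sum_count_set)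
qed

lemma length_le_seq_weight:
  fixes m :: "nat \<Rightarrow> real"
  assumes "\<forall>k. m k > 0" "H \<ge> 1" "\<forall>p q. m (p + q) \<le> H ^ (p + q) * m p * m q" "m 0 = 1"
    and "set \<alpha> \<subseteq> {1..N}"
  shows "m (length \<alpha>) \<le> (H ^ N) ^ length \<alpha> * seq_weight N (\<lambda>_. m) \<alpha>"
proof -
  have "m (\<Sum>j\<in>{1..N}. count_list \<alpha> j)
      \<le> H ^ (card {1..N} * (\<Sum>j\<in>{1..N}. count_list \<alpha> j)) * seq_weight N (\<lambda>_. m) \<alpha>"
    unfolding seq_weight_def by (rule moderate_growth_le_prod[OF assms(1-4)]) simp
  then show ?thesis using assms(5) by (simp add: sum_count_set power_mult)
qed

lemma sum_split_last:
  assumes "n \<ge> 1" shows "(\<Sum>r=1..n. f r) = sum_list (map f [1..<n]) + f n"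
proof -
  have "{1..n} = insert n (set [1..<n])" using assms by auto
  then show ?thesis by (simp add: sum_list_distinct_conv_sum_set add.commute)
qed

lemma opword_append: "opword Y (v @ w) x = opword Y v (opword Y w x)"
  by (induction v) auto

lemma opword_replicate: "opword Y (replicate k j) x = (Y j ^^ k) x"
  by (induction k) auto

locale common_domain =
  fixes X :: "nat \<Rightarrow> 'a::complex_inner \<Rightarrow> 'a" and D :: "'a set" and n :: nat
  assumes subspace: "complex_subspace D"
    and linear: "\<forall>j\<in>{1..n}. linear_on D (X j)"
    and invariant: "\<forall>j\<in>{1..n}. \<forall>x\<in>D. X j x \<in> D"
begin

lemma zero_in_D: "0 \<in> D"
  using subspace by (simp add: complex_subspace_def)

lemma add_in_D: "x \<in> D \<Longrightarrow> y \<in> D \<Longrightarrow> x + y \<in> D"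
  using subspace by (simp add: complex_subspace_def)

lemma scaleC_in_D: "x \<in> D \<Longrightarrow> c *\<^sub>C x \<in> D"
  using subspace by (simp add: complex_subspace_def)

lemma sum_in_D: "(\<And>i. i \<in> I \<Longrightarrow> f i \<in> D) \<Longrightarrow> sum f I \<in> D"
  by (induction I rule: infinite_finite_induct) (auto simp: zero_in_D add_in_D)

lemma X_add: "j \<in> {1..n} \<Longrightarrow> x \<in> D \<Longrightarrow> y \<in> D \<Longrightarrow> X j (x + y) = X j x + X j y"
  using linear by (auto simp: linear_on_def)

lemma X_scaleC: "j \<in> {1..n} \<Longrightarrow> x \<in> D \<Longrightarrow> X j (c *\<^sub>C x) = c *\<^sub>C X j x"
  using linear by (auto simp: linear_on_def)

lemma X_zero: "j \<in> {1..n} \<Longrightarrow> X j 0 = 0"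
  using X_add[of j 0 0] zero_in_D by simp

lemma X_in_D: "j \<in> {1..n} \<Longrightarrow> x \<in> D \<Longrightarrow> X j x \<in> D"
  using invariant by auto

lemma X_sum: "j \<in> {1..n} \<Longrightarrow> (\<And>i. i \<in> I \<Longrightarrow> f i \<in> D) \<Longrightarrow> X j (sum f I) = (\<Sum>i\<in>I. X j (f i))"
proof (induction I rule: infinite_finite_induct)
  case (insert i I)
  then show ?case by (simp add: X_add sum_in_D)
qed (auto simp: X_zero)

lemma opword_in_D: "set w \<subseteq> {1..n} \<Longrightarrow> x \<in> D \<Longrightarrow> opword X w x \<in> D"
  by (induction w) (auto simp: X_in_D)

lemma funpow_in_D: "j \<in> {1..n} \<Longrightarrow> x \<in> D \<Longrightarrow> (X j ^^ k) x \<in> D"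
  by (induction k) (auto simp: X_in_D)

lemma cinner_opword_adjoint:
  assumes herm: "\<forall>j\<in>{1..n}. hermitian_on D (X j) \<or> skew_hermitian_on D (X j)"
    and y: "y \<in> D"
  shows "set w \<subseteq> {1..n} \<Longrightarrow> z \<in> D \<Longrightarrow>
    \<exists>e. cmod e = 1 \<and> cinner (opword X w y) z = e * cinner y (opword X (rev w) z)"
proof (induction w arbitrary: z)
  case Nil then show ?case by (intro exI[of _ 1]) auto
next
  case (Cons j w)
  have j: "j \<in> {1..n}" and w: "set w \<subseteq> {1..n}" using Cons.prems by auto
  obtain e1 where e1: "cmod e1 = 1"
    "cinner (X j (opword X w y)) z = e1 * cinner (opword X w y) (X j z)"
  proof (cases "hermitian_on D (X j)")
    case True
    then show ?thesis using that[of 1] opword_in_D[OF w y] Cons.prems(2)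
      by (simp add: hermitian_on_def)
  next
    case False
    then have "skew_hermitian_on D (X j)" using herm j by blast
    then show ?thesis using that[of "-1"] opword_in_D[OF w y] Cons.prems(2)
      by (simp add: skew_hermitian_on_def)
  qed
  obtain e2 where e2: "cmod e2 = 1"
    "cinner (opword X w y) (X j z) = e2 * cinner y (opword X (rev w) (X j z))"
    using Cons.IH[OF w X_in_D[OF j Cons.prems(2)]] by blast
  have "cinner (opword X (j # w) y) z = (e1 * e2) * cinner y (opword X (rev (j # w)) z)"
    using e1 e2 by (simp add: opword_append)
  moreover have "cmod (e1 * e2) = 1" using e1 e2 by (simp add: norm_mult)
  ultimately show ?case by blast
qed

lemma norm_opword_sq:
  assumes "\<forall>j\<in>{1..n}. hermitian_on D (X j) \<or> skew_hermitian_on D (X j)"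
    and "u \<in> D" and "set \<alpha> \<subseteq> {1..n}"
  shows "(norm (opword X \<alpha> u))\<^sup>2 = cmod (cinner u (opword X (rev \<alpha> @ \<alpha>) u))"
proof -
  obtain e where "cmod e = 1"
    "cinner (opword X \<alpha> u) (opword X \<alpha> u) = e * cinner u (opword X (rev \<alpha>) (opword X \<alpha> u))"
    using cinner_opword_adjoint[OF assms(1,2,3) opword_in_D[OF assms(3,2)]] by blast
  then show ?thesis
    by (metis cinner_self_norm norm_mult mult_1 norm_of_real abs_of_nonneg zero_le_power2
        opword_append)
qed

lemma cinner_funpow_opword_le:
  assumes "\<forall>j\<in>{1..n}. hermitian_on D (X j) \<or> skew_hermitian_on D (X j)"
    and "u \<in> D" and "j \<in> {1..n}" and "set \<beta> \<subseteq> {1..n}"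
  shows "cmod (cinner u ((X j ^^ k) (opword X \<beta> u))) \<le> norm ((X j ^^ k) u) * norm (opword X \<beta> u)"
proof -
  have "set (replicate k j) \<subseteq> {1..n}" using assms(3) by auto
  then obtain e where "cmod e = 1"
    "cinner ((X j ^^ k) u) (opword X \<beta> u) = e * cinner u ((X j ^^ k) (opword X \<beta> u))"
    using cinner_opword_adjoint[OF assms(1,2) _ opword_in_D[OF assms(4,2)]]
    by (metis opword_replicate rev_replicate)
  then show ?thesis
    by (metis cinner_Cauchy_Schwarz norm_mult mult_1)
qed

end

section \<open>Normal ordering modulo the commutation relations\<close>

text \<open>A term \<open>(c, k, \<beta>)\<close> stands for \<open>c X\<^sub>n\<^sup>k X\<^sub>\<beta>\<close>, a list of terms for their sum;
  \<open>nf_mass m s\<close> weighs each term by \<open>|c| m\<^sub>k\<^sub>+\<^sub>|\<^sub>\<beta>\<^sub>|\<^sub>+\<^sub>s\<close>, the offset \<open>s\<close> accounting for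
  operators still to be applied on the left.\<close>

type_synonym nf_term = "complex \<times> nat \<times> nat list"

locale commutator_closed = common_domain X D n for X :: "nat \<Rightarrow> 'a::complex_inner \<Rightarrow> 'a" and D n +
  fixes coeff :: "nat \<Rightarrow> nat \<Rightarrow> complex"
  assumes n_ge_2: "n \<ge> 2"
    and commutator: "\<forall>j\<in>{1..n-1}. \<forall>x\<in>D.
      X j (X n x) - X n (X j x) = (\<Sum>k=1..n. coeff j k *\<^sub>C X k x)"
begin

definition lin_comb :: "(nat \<Rightarrow> complex) \<Rightarrow> 'a \<Rightarrow> 'a" where
  "lin_comb a x = (\<Sum>r=1..n. a r *\<^sub>C X r x)"

definition coeff_norm :: "(nat \<Rightarrow> complex) \<Rightarrow> real" where
  "coeff_norm a = (\<Sum>r=1..n. cmod (a r))"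

definition comm_coeffs :: "(nat \<Rightarrow> complex) \<Rightarrow> nat \<Rightarrow> complex" where
  "comm_coeffs a = (\<lambda>s. \<Sum>r=1..n-1. a r * coeff r s)"

definition \<kappa> :: real where
  "\<kappa> = (\<Sum>r=1..n-1. \<Sum>s=1..n. cmod (coeff r s))"

definition nf_eval :: "nf_term list \<Rightarrow> 'a \<Rightarrow> 'a" where
  "nf_eval R x = sum_list (map (\<lambda>(c, k, \<beta>). c *\<^sub>C (X n ^^ k) (opword X \<beta> x)) R)"

definition nf_mass :: "(nat \<Rightarrow> real) \<Rightarrow> nat \<Rightarrow> nf_term list \<Rightarrow> real" where
  "nf_mass m s R = sum_list (map (\<lambda>(c, k, \<beta>). cmod c * m (k + length \<beta> + s)) R)"

definition normal_ordered :: "nf_term list \<Rightarrow> bool" where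
  "normal_ordered R \<longleftrightarrow> (\<forall>(c, k, \<beta>)\<in>set R. set \<beta> \<subseteq> {1..n-1})"

definition nf_shift :: "nf_term list \<Rightarrow> nf_term list" where
  "nf_shift R = map (\<lambda>(c, k, \<beta>). (c, Suc k, \<beta>)) R"

definition nf_scale :: "complex \<Rightarrow> nf_term list \<Rightarrow> nf_term list" where
  "nf_scale d R = map (\<lambda>(c, k, \<beta>). (d * c, k, \<beta>)) R"

lemma n_ge_1: "n \<ge> 1"
  using n_ge_2 by simp

lemma n_in: "n \<in> {1..n}"
  using n_ge_2 by simp

lemma lower_indices_subset: "{1..n-1} \<subseteq> {1..n}"
  by auto

lemma lower_word_subset: "set \<beta> \<subseteq> {1..n-1} \<Longrightarrow> set \<beta> \<subseteq> {1..n}"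
  by (erule subset_trans[OF _ lower_indices_subset])

lemma \<kappa>_nonneg: "\<kappa> \<ge> 0"
  unfolding \<kappa>_def by (intro sum_nonneg) auto

lemma coeff_norm_comm_coeffs: "coeff_norm (comm_coeffs a) \<le> \<kappa> * coeff_norm a"
proof -
  have "coeff_norm (comm_coeffs a) \<le> (\<Sum>s=1..n. \<Sum>r=1..n-1. cmod (a r) * cmod (coeff r s))"
    unfolding coeff_norm_def comm_coeffs_def
    by (intro sum_mono order.trans[OF norm_sum]) (simp add: norm_mult)
  also have "\<dots> = (\<Sum>r=1..n-1. cmod (a r) * (\<Sum>s=1..n. cmod (coeff r s)))"
    by (subst sum.swap) (simp add: sum_distrib_left)
  also have "\<dots> \<le> (\<Sum>r=1..n-1. cmod (a r) * \<kappa>)"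
    unfolding \<kappa>_def by (intro sum_mono mult_left_mono member_le_sum) (auto intro: sum_nonneg)
  also have "\<dots> \<le> \<kappa> * coeff_norm a"
    unfolding coeff_norm_def using \<kappa>_nonneg
    by (simp add: sum_distrib_left mult.commute mult_left_mono sum_mono2)
  finally show ?thesis .
qed

lemma lin_comb_X_n:
  assumes x: "x \<in> D"
  shows "lin_comb a (X n x) = X n (lin_comb a x) + lin_comb (comm_coeffs a) x"
proof -
  define d where "d r = (if r \<in> {1..n-1} then (\<Sum>s=1..n. coeff r s *\<^sub>C X s x) else 0)" for r
  have X_r_X_n: "X r (X n x) = X n (X r x) + d r" if "r \<in> {1..n}" for r
    using that commutator x by (cases "r = n") (auto simp: d_def algebra_simps)
  have "lin_comb a (X n x) = (\<Sum>r=1..n. a r *\<^sub>C X n (X r x)) + (\<Sum>r=1..n. a r *\<^sub>C d r)"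
    unfolding lin_comb_def by (simp add: X_r_X_n scaleC_add_right sum.distrib)
  also have "(\<Sum>r=1..n. a r *\<^sub>C X n (X r x)) = X n (lin_comb a x)"
    unfolding lin_comb_def using x
    by (subst X_sum[OF n_in]) (auto simp: X_scaleC[OF n_in] X_in_D scaleC_in_D)
  also have "(\<Sum>r=1..n. a r *\<^sub>C d r) = (\<Sum>r=1..n-1. \<Sum>s=1..n. (a r * coeff r s) *\<^sub>C X s x)"
    by (subst sum.mono_neutral_right[of "{1..n}" "{1..n-1}"])
       (auto simp: d_def scaleC_sum_right scaleC_scaleC)
  also have "\<dots> = lin_comb (comm_coeffs a) x"
    unfolding lin_comb_def comm_coeffs_def by (subst sum.swap) (simp add: scaleC_sum_left)
  finally show ?thesis .
qed

lemma lin_comb_unit: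
  assumes "j \<in> {1..n}" shows "lin_comb (\<lambda>r. if r = j then 1 else 0) v = X j v"
proof -
  have "lin_comb (\<lambda>r. if r = j then 1 else 0) v = (\<Sum>r\<in>{1..n}. if r = j then X r v else 0)"
    unfolding lin_comb_def by (rule sum.cong) (auto simp: scaleC_one)
  then show ?thesis using assms by simp
qed

lemma coeff_norm_unit: "j \<in> {1..n} \<Longrightarrow> coeff_norm (\<lambda>r. if r = j then 1 else 0) = 1"
  unfolding coeff_norm_def by (simp add: if_distrib cong: if_cong)

lemma nf_eval_Nil [simp]: "nf_eval [] x = 0"
  by (simp add: nf_eval_def)

lemma nf_eval_Cons [simp]:
  "nf_eval ((c, k, \<beta>) # R) x = c *\<^sub>C (X n ^^ k) (opword X \<beta> x) + nf_eval R x"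
  by (simp add: nf_eval_def)

lemma nf_mass_Nil [simp]: "nf_mass m s [] = 0"
  by (simp add: nf_mass_def)

lemma nf_mass_Cons [simp]: "nf_mass m s ((c, k, \<beta>) # R) = cmod c * m (k + length \<beta> + s) + nf_mass m s R"
  by (simp add: nf_mass_def)

lemma normal_ordered_Nil [simp]: "normal_ordered []"
  by (simp add: normal_ordered_def)

lemma normal_ordered_Cons [simp]:
  "normal_ordered ((c, k, \<beta>) # R) \<longleftrightarrow> set \<beta> \<subseteq> {1..n-1} \<and> normal_ordered R"
  by (simp add: normal_ordered_def)

lemma nf_eval_append: "nf_eval (R1 @ R2) x = nf_eval R1 x + nf_eval R2 x"
  by (simp add: nf_eval_def)

lemma nf_mass_append: "nf_mass m s (R1 @ R2) = nf_mass m s R1 + nf_mass m s R2"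
  by (simp add: nf_mass_def)

lemma normal_ordered_append: "normal_ordered (R1 @ R2) \<longleftrightarrow> normal_ordered R1 \<and> normal_ordered R2"
  unfolding normal_ordered_def by (simp only: set_append ball_Un)

lemma normal_ordered_shift: "normal_ordered (nf_shift R) \<longleftrightarrow> normal_ordered R"
  unfolding normal_ordered_def nf_shift_def by (simp add: split_def)

lemma normal_ordered_scale: "normal_ordered (nf_scale d R) \<longleftrightarrow> normal_ordered R"
  unfolding normal_ordered_def nf_scale_def by (simp add: split_def)

lemma ordered_term_in_D: "set \<beta> \<subseteq> {1..n-1} \<Longrightarrow> x \<in> D \<Longrightarrow> (X n ^^ k) (opword X \<beta> x) \<in> D"
  by (intro funpow_in_D[OF n_in] opword_in_D lower_word_subset)

lemma nf_eval_in_D: "normal_ordered R \<Longrightarrow> x \<in> D \<Longrightarrow> nf_eval R x \<in> D"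
  by (induction R) (auto simp: zero_in_D add_in_D scaleC_in_D ordered_term_in_D)

lemma nf_eval_shift: "normal_ordered R \<Longrightarrow> x \<in> D \<Longrightarrow> nf_eval (nf_shift R) x = X n (nf_eval R x)"
proof (induction R)
  case Nil then show ?case by (simp add: nf_shift_def X_zero[OF n_in])
next
  case (Cons t R)
  then show ?case
    by (cases t) (auto simp: nf_shift_def X_add[OF n_in] X_scaleC[OF n_in] scaleC_in_D
        ordered_term_in_D nf_eval_in_D)
qed

lemma nf_mass_shift: "nf_mass m s (nf_shift R) = nf_mass m (Suc s) R"
  unfolding nf_mass_def nf_shift_def by (induction R) auto

lemma nf_eval_scale: "nf_eval (nf_scale d R) x = d *\<^sub>C nf_eval R x"
  unfolding nf_eval_def nf_scale_def
  by (induction R) (auto simp: scaleC_add_right scaleC_scaleC)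

lemma nf_mass_scale: "nf_mass m s (nf_scale d R) = cmod d * nf_mass m s R"
  unfolding nf_mass_def nf_scale_def by (induction R) (auto simp: norm_mult algebra_simps)

lemma normal_form_lin_comb_opword:
  assumes \<beta>: "set \<beta> \<subseteq> {1..n-1}"
  shows "\<exists>R. normal_ordered R \<and> (\<forall>x. nf_eval R x = lin_comb a (opword X \<beta> x))
    \<and> (\<forall>s. nf_mass m s R = coeff_norm a * m (length \<beta> + 1 + s))"
proof (intro exI conjI allI)
  define R :: "nf_term list" where "R = map (\<lambda>r. (a r, 0, r # \<beta>)) [1..<n] @ [(a n, 1, \<beta>)]"
  show "normal_ordered R" unfolding R_def normal_ordered_def using \<beta> by auto
  show "nf_eval R x = lin_comb a (opword X \<beta> x)" for x
    unfolding R_def nf_eval_def lin_comb_def sum_split_last[OF n_ge_1] by (simp add: o_def)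
  show "nf_mass m s R = coeff_norm a * m (length \<beta> + 1 + s)" for s
    unfolding R_def nf_mass_def coeff_norm_def sum_split_last[OF n_ge_1]
    by (simp add: o_def sum_list_mult_const sum_list_const_mult algebra_simps)
qed

lemma normal_form_lin_comb_funpow:
  assumes m: "\<forall>k. m k \<ge> 0" and \<beta>: "set \<beta> \<subseteq> {1..n-1}"
  shows "\<exists>R. normal_ordered R
    \<and> (\<forall>x\<in>D. nf_eval R x = lin_comb a ((X n ^^ k) (opword X \<beta> x)))
    \<and> (\<forall>s. nf_mass m s R \<le> coeff_norm a * binomial_shift_sum m \<kappa> k (k + length \<beta> + 1 + s))"
proof (induction k arbitrary: a)
  case 0
  show ?case using normal_form_lin_comb_opword[OF \<beta>, of a m] by fastforce
next
  case (Suc k)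
  obtain R1 where R1: "normal_ordered R1"
    "\<forall>x\<in>D. nf_eval R1 x = lin_comb a ((X n ^^ k) (opword X \<beta> x))"
    "\<forall>s. nf_mass m s R1 \<le> coeff_norm a * binomial_shift_sum m \<kappa> k (k + length \<beta> + 1 + s)"
    using Suc.IH by blast
  obtain R2 where R2: "normal_ordered R2"
    "\<forall>x\<in>D. nf_eval R2 x = lin_comb (comm_coeffs a) ((X n ^^ k) (opword X \<beta> x))"
    "\<forall>s. nf_mass m s R2 \<le> coeff_norm (comm_coeffs a) * binomial_shift_sum m \<kappa> k (k + length \<beta> + 1 + s)"
    using Suc.IH by blast
  define R where "R = nf_shift R1 @ R2"
  have "normal_ordered R" using R1 R2 by (simp add: R_def normal_ordered_append normal_ordered_shift)
  moreover have "nf_eval R x = lin_comb a ((X n ^^ Suc k) (opword X \<beta> x))" if x: "x \<in> D" for x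
    using R1 R2 x lin_comb_X_n[OF ordered_term_in_D[OF \<beta> x]]
    by (simp add: R_def nf_eval_append nf_eval_shift)
  moreover have "nf_mass m s R \<le> coeff_norm a * binomial_shift_sum m \<kappa> (Suc k) (Suc k + length \<beta> + 1 + s)" for s
  proof -
    define M where "M = k + length \<beta> + 1 + s"
    have "nf_mass m s R = nf_mass m (Suc s) R1 + nf_mass m s R2"
      by (simp add: R_def nf_mass_append nf_mass_shift)
    also have "\<dots> \<le> coeff_norm a * binomial_shift_sum m \<kappa> k (Suc M)
        + coeff_norm (comm_coeffs a) * binomial_shift_sum m \<kappa> k M"
      using R1(3)[rule_format, of "Suc s"] R2(3)[rule_format, of s] by (simp add: M_def)
    also have "\<dots> \<le> coeff_norm a * binomial_shift_sum m \<kappa> k (Suc M)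
        + (\<kappa> * coeff_norm a) * binomial_shift_sum m \<kappa> k M"
      using coeff_norm_comm_coeffs binomial_shift_sum_nonneg[OF m \<kappa>_nonneg]
      by (intro add_left_mono mult_right_mono) auto
    also have "\<dots> = coeff_norm a * binomial_shift_sum m \<kappa> (Suc k) (Suc M)"
      by (simp add: binomial_shift_sum_Suc algebra_simps)
    finally show ?thesis by (simp add: M_def)
  qed
  ultimately show ?case by blast
qed

lemma normal_form_X_left:
  assumes m: "\<forall>k. m k \<ge> 0" and j: "j \<in> {1..n-1}"
    and E: "\<forall>k M. k \<le> M \<longrightarrow> binomial_shift_sum m \<kappa> k M \<le> E * m M"
  shows "normal_ordered R \<Longrightarrow> \<exists>R'. normal_ordered R'
    \<and> (\<forall>x\<in>D. nf_eval R' x = X j (nf_eval R x)) \<and> (\<forall>s. nf_mass m s R' \<le> E * nf_mass m (Suc s) R)"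
proof (induction R)
  case Nil
  then show ?case
    using X_zero j lower_indices_subset by (intro exI[of _ "[]"]) (auto simp: normal_ordered_def)
next
  case (Cons t R)
  obtain c k \<beta> where t: "t = (c, k, \<beta>)" by (cases t)
  have \<beta>: "set \<beta> \<subseteq> {1..n-1}" and R: "normal_ordered R" using Cons.prems t by auto
  obtain R' where R': "normal_ordered R'" "\<forall>x\<in>D. nf_eval R' x = X j (nf_eval R x)"
    "\<forall>s. nf_mass m s R' \<le> E * nf_mass m (Suc s) R"
    using Cons.IH R by blast
  have j': "j \<in> {1..n}" using j lower_indices_subset by blast
  obtain Rt where Rt: "normal_ordered Rt"
    "\<forall>x\<in>D. nf_eval Rt x = X j ((X n ^^ k) (opword X \<beta> x))"
    "\<forall>s. nf_mass m s Rt \<le> binomial_shift_sum m \<kappa> k (k + length \<beta> + 1 + s)"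
    using normal_form_lin_comb_funpow[OF m \<beta>, of "\<lambda>r. if r = j then 1 else 0" k]
    by (auto simp: lin_comb_unit[OF j'] coeff_norm_unit[OF j'])
  define Q where "Q = nf_scale c Rt @ R'"
  have "normal_ordered Q" using Rt R' by (simp add: Q_def normal_ordered_append normal_ordered_scale)
  moreover have "nf_eval Q x = X j (nf_eval (t # R) x)" if x: "x \<in> D" for x
    using Rt R' x R j' ordered_term_in_D[OF \<beta> x]
    by (simp add: t Q_def nf_eval_append nf_eval_scale X_add X_scaleC scaleC_in_D nf_eval_in_D)
  moreover have "nf_mass m s Q \<le> E * nf_mass m (Suc s) (t # R)" for s
  proof -
    have "nf_mass m s Q = cmod c * nf_mass m s Rt + nf_mass m s R'"
      by (simp add: Q_def nf_mass_append nf_mass_scale)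
    also have "\<dots> \<le> cmod c * (E * m (k + length \<beta> + Suc s)) + E * nf_mass m (Suc s) R"
      using Rt(3)[rule_format, of s] E R'(3)
      by (intro add_mono mult_left_mono) (auto intro: order.trans)
    also have "\<dots> = E * nf_mass m (Suc s) (t # R)" by (simp add: t algebra_simps)
    finally show ?thesis .
  qed
  ultimately show ?case by blast
qed

lemma normal_form_opword:
  assumes m: "\<forall>k. m k \<ge> 0" and E1: "E \<ge> 1"
    and E: "\<forall>k M. k \<le> M \<longrightarrow> binomial_shift_sum m \<kappa> k M \<le> E * m M"
  shows "set w \<subseteq> {1..n} \<Longrightarrow> \<exists>R. normal_ordered R \<and> (\<forall>x\<in>D. nf_eval R x = opword X w x)
    \<and> (\<forall>s. nf_mass m s R \<le> E ^ length w * m (length w + s))"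
proof (induction w)
  case Nil
  have "nf_eval [(1, 0, [])] x = opword X [] x" for x by (simp add: scaleC_one)
  then show ?case by (intro exI[of _ "[(1, 0, [])]"]) simp
next
  case (Cons j w)
  then obtain R where R: "normal_ordered R" "\<forall>x\<in>D. nf_eval R x = opword X w x"
    "\<forall>s. nf_mass m s R \<le> E ^ length w * m (length w + s)"
    by auto
  have grow: "E ^ length w * m (length w + Suc s) \<le> E ^ length (j # w) * m (length (j # w) + s)" for s
    using mult_right_mono[OF E1, of "E ^ length w * m (length w + Suc s)"] E1 m by simp
  show ?case
  proof (cases "j = n")
    case True
    have "nf_mass m s (nf_shift R) \<le> E ^ length (j # w) * m (length (j # w) + s)" for s
      using R(3)[rule_format, of "Suc s"] grow[of s] by (simp add: nf_mass_shift)
    then show ?thesis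
      using R True by (intro exI[of _ "nf_shift R"]) (auto simp: normal_ordered_shift nf_eval_shift)
  next
    case False
    then have j: "j \<in> {1..n-1}" using Cons.prems by auto
    obtain R' where R': "normal_ordered R'" "\<forall>x\<in>D. nf_eval R' x = X j (nf_eval R x)"
      "\<forall>s. nf_mass m s R' \<le> E * nf_mass m (Suc s) R"
      using normal_form_X_left[OF m j E R(1)] by blast
    have "nf_mass m s R' \<le> E ^ length (j # w) * m (length (j # w) + s)" for s
    proof -
      have "nf_mass m s R' \<le> E * nf_mass m (Suc s) R" using R' by blast
      also have "\<dots> \<le> E * (E ^ length w * m (length w + Suc s))"
        using R(3)[rule_format, of "Suc s"] E1 by (intro mult_left_mono) auto
      finally show ?thesis by simp
    qed
    then show ?thesis using R R' by auto
  qed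
qed

lemma cinner_nf_eval_le:
  assumes "\<forall>k \<beta>. set \<beta> \<subseteq> {1..n-1} \<longrightarrow> cmod (cinner u ((X n ^^ k) (opword X \<beta> u))) \<le> K * m (k + length \<beta>)"
  shows "normal_ordered R \<Longrightarrow> cmod (cinner u (nf_eval R u)) \<le> K * nf_mass m 0 R"
proof (induction R)
  case (Cons t R)
  obtain c k \<beta> where t: "t = (c, k, \<beta>)" by (cases t)
  have "cmod (cinner u (nf_eval (t # R) u))
      \<le> cmod c * cmod (cinner u ((X n ^^ k) (opword X \<beta> u))) + cmod (cinner u (nf_eval R u))"
    by (simp add: t cinner_add_right cinner_scaleC_right norm_mult[symmetric] norm_triangle_ineq)
  also have "\<dots> \<le> cmod c * (K * m (k + length \<beta>)) + K * nf_mass m 0 R"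
    using assms Cons t by (intro add_mono mult_left_mono) auto
  also have "\<dots> = K * nf_mass m 0 (t # R)" by (simp add: t algebra_simps)
  finally show ?case .
qed simp

lemma norm_opword_sq_le:
  assumes herm: "\<forall>j\<in>{1..n}. hermitian_on D (X j) \<or> skew_hermitian_on D (X j)"
    and u: "u \<in> D" and \<alpha>: "set \<alpha> \<subseteq> {1..n}"
    and pos: "\<forall>k. m k > 0" and L: "L \<ge> 1" and A3: "\<forall>p\<ge>1. real p * m (p - 1) \<le> L * m p"
    and ordered: "\<forall>k \<beta>. set \<beta> \<subseteq> {1..n-1} \<longrightarrow>
      cmod (cinner u ((X n ^^ k) (opword X \<beta> u))) \<le> K * m (k + length \<beta>)"
    and K: "K \<ge> 0"
  shows "(norm (opword X \<alpha> u))\<^sup>2 \<le> K * (exp (\<kappa> * L) ^ (2 * length \<alpha>) * m (2 * length \<alpha>))"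
proof -
  have m: "\<forall>k. m k \<ge> 0" using pos by (auto intro: less_imp_le)
  have E1: "exp (\<kappa> * L) \<ge> 1" using \<kappa>_nonneg L by simp
  have E: "\<forall>k M. k \<le> M \<longrightarrow> binomial_shift_sum m \<kappa> k M \<le> exp (\<kappa> * L) * m M"
    using binomial_shift_sum_le_exp[OF pos L A3 \<kappa>_nonneg] by blast
  have "set (rev \<alpha> @ \<alpha>) \<subseteq> {1..n}" using \<alpha> by simp
  then obtain R where R: "normal_ordered R" "\<forall>x\<in>D. nf_eval R x = opword X (rev \<alpha> @ \<alpha>) x"
    "\<forall>s. nf_mass m s R \<le> exp (\<kappa> * L) ^ length (rev \<alpha> @ \<alpha>) * m (length (rev \<alpha> @ \<alpha>) + s)"
    using normal_form_opword[OF m E1 E] by blast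
  have "(norm (opword X \<alpha> u))\<^sup>2 = cmod (cinner u (nf_eval R u))"
    using norm_opword_sq[OF herm u \<alpha>] R(2) u by simp
  also have "\<dots> \<le> K * nf_mass m 0 R" by (rule cinner_nf_eval_le[OF ordered R(1)])
  also have "\<dots> \<le> K * (exp (\<kappa> * L) ^ (2 * length \<alpha>) * m (2 * length \<alpha>))"
    using R(3)[rule_format, of 0] K by (intro mult_left_mono) (simp_all add: mult_2)
  finally show ?thesis .
qed

end

section \<open>The classes \<open>S\<^sub>m\<close>\<close>

lemma S_class_imp_S_class_pred:
  assumes "u \<in> S_class (Suc N) Y (\<lambda>_. m)" and "m 0 = 1"
  shows "u \<in> S_class N Y (\<lambda>_. m)"
proof -
  obtain A C where "A > 0" "C > 0" and bound: "\<forall>\<alpha>\<in>multi_indices (Suc N).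
      norm (opword Y \<alpha> u) \<le> C * A ^ length \<alpha> * seq_weight (Suc N) (\<lambda>_. m) \<alpha>"
    using assms(1) unfolding S_class_def by blast
  have "seq_weight (Suc N) (\<lambda>_. m) \<alpha> = seq_weight N (\<lambda>_. m) \<alpha>" if "\<alpha> \<in> multi_indices N" for \<alpha>
  proof -
    have "count_list \<alpha> (Suc N) = 0" using that by (auto simp: multi_indices_def count_list_0_iff)
    then show ?thesis using assms(2) by (simp add: seq_weight_Suc)
  qed
  moreover have "multi_indices N \<subseteq> multi_indices (Suc N)" by (auto simp: multi_indices_def)
  ultimately show ?thesis
    using \<open>A > 0\<close> \<open>C > 0\<close> bound unfolding S_class_def by force
qed

lemma S_class_imp_S_single:
  assumes "u \<in> S_class N Y (\<lambda>_. m)" and "j \<in> {1..N}" and "m 0 = 1"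
  shows "u \<in> S_single (Y j) m"
proof -
  obtain A C where "A > 0" "C > 0" and bound: "\<forall>\<alpha>\<in>multi_indices N.
      norm (opword Y \<alpha> u) \<le> C * A ^ length \<alpha> * seq_weight N (\<lambda>_. m) \<alpha>"
    using assms(1) unfolding S_class_def by blast
  have "norm ((Y j ^^ k) u) \<le> C * A ^ k * m k" if "k \<ge> 1" for k
  proof -
    have "replicate k j \<in> multi_indices N" using that assms(2) by (auto simp: multi_indices_def)
    then show ?thesis
      using bound assms(2,3) by (fastforce simp: opword_replicate seq_weight_replicate)
  qed
  then show ?thesis
    using \<open>A > 0\<close> \<open>C > 0\<close> unfolding S_single_def by blast
qed

text \<open>Both bounds below also cover the empty word, resp. \<open>k = 0\<close>, where
  \<open>S_class\<close> and \<open>S_single\<close> say nothing.\<close>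

lemma S_class_length_bound:
  fixes m :: "nat \<Rightarrow> real"
  assumes "u \<in> S_class N Y (\<lambda>_. m)"
    and "\<forall>k. m k > 0" "\<forall>p\<ge>1. (m p)\<^sup>2 \<le> m (p - 1) * m (p + 1)" "m 0 = 1"
  obtains C A where "C > 0" "A > 0"
    "\<And>\<beta>. set \<beta> \<subseteq> {1..N} \<Longrightarrow> norm (opword Y \<beta> u) \<le> C * A ^ length \<beta> * m (length \<beta>)"
proof -
  obtain A C where A: "A > 0" and C: "C > 0" and bound: "\<forall>\<alpha>\<in>multi_indices N.
      norm (opword Y \<alpha> u) \<le> C * A ^ length \<alpha> * seq_weight N (\<lambda>_. m) \<alpha>"
    using assms(1) unfolding S_class_def by blast
  have "norm (opword Y \<beta> u) \<le> max C (norm u) * A ^ length \<beta> * m (length \<beta>)"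
    if \<beta>: "set \<beta> \<subseteq> {1..N}" for \<beta>
  proof (cases "\<beta> = []")
    case False
    then have "norm (opword Y \<beta> u) \<le> C * A ^ length \<beta> * seq_weight N (\<lambda>_. m) \<beta>"
      using bound \<beta> by (simp add: multi_indices_def)
    also have "\<dots> \<le> max C (norm u) * A ^ length \<beta> * m (length \<beta>)"
      using A C assms(2) seq_weight_le_length[OF assms(2-4) \<beta>]
      by (intro mult_mono) (auto intro: seq_weight_nonneg less_imp_le)
    finally show ?thesis .
  qed (simp add: assms(4))
  then show ?thesis using that A C by (metis max.strict_coboundedI1)
qed

lemma S_single_funpow_bound:
  fixes m :: "nat \<Rightarrow> real"
  assumes "u \<in> S_single Y m" and "\<forall>k. m k > 0" "m 0 = 1"
  obtains C A where "C > 0" "A > 0" "\<And>k. norm ((Y ^^ k) u) \<le> C * A ^ k * m k"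
proof -
  obtain A C where A: "A > 0" and C: "C > 0" and bound: "\<forall>k\<ge>1. norm ((Y ^^ k) u) \<le> C * A ^ k * m k"
    using assms(1) unfolding S_single_def by blast
  have "norm ((Y ^^ k) u) \<le> max C (norm u) * A ^ k * m k" for k
  proof (cases "k = 0")
    case False
    then have "norm ((Y ^^ k) u) \<le> C * A ^ k * m k" using bound by simp
    also have "\<dots> \<le> max C (norm u) * A ^ k * m k"
      using A assms(2) by (intro mult_right_mono) (auto intro: less_imp_le)
    finally show ?thesis .
  qed (simp add: assms(3))
  then show ?thesis using that A C by (metis max.strict_coboundedI1)
qed

lemma S_class_of_length_bound:
  fixes m :: "nat \<Rightarrow> real"
  assumes bound: "\<And>\<alpha>. set \<alpha> \<subseteq> {1..N} \<Longrightarrow> norm (opword Y \<alpha> u) \<le> C * B ^ length \<alpha> * m (length \<alpha>)"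
    and C: "C > 0" and B: "B > 0"
    and "\<forall>k. m k > 0" "H \<ge> 1" "\<forall>p q. m (p + q) \<le> H ^ (p + q) * m p * m q" "m 0 = 1"
  shows "u \<in> S_class N Y (\<lambda>_. m)"
  unfolding S_class_def
proof (intro CollectI exI conjI ballI)
  fix \<alpha> assume "\<alpha> \<in> multi_indices N"
  then have \<alpha>: "set \<alpha> \<subseteq> {1..N}" by (simp add: multi_indices_def)
  have "norm (opword Y \<alpha> u) \<le> C * B ^ length \<alpha> * m (length \<alpha>)" by (rule bound[OF \<alpha>])
  also have "\<dots> \<le> C * B ^ length \<alpha> * ((H ^ N) ^ length \<alpha> * seq_weight N (\<lambda>_. m) \<alpha>)"
    using length_le_seq_weight[OF assms(4-7) \<alpha>] C B by (intro mult_left_mono) auto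
  also have "\<dots> = C * (B * H ^ N) ^ length \<alpha> * seq_weight N (\<lambda>_. m) \<alpha>"
    by (simp add: power_mult_distrib)
  finally show "norm (opword Y \<alpha> u) \<le> C * (B * H ^ N) ^ length \<alpha> * seq_weight N (\<lambda>_. m) \<alpha>" .
qed (use C B \<open>H \<ge> 1\<close> in auto)

context commutator_closed
begin

lemma norm_opword_le_of_ordered_bounds:
  fixes m :: "nat \<Rightarrow> real"
  assumes herm: "\<forall>j\<in>{1..n}. hermitian_on D (X j) \<or> skew_hermitian_on D (X j)"
    and u: "u \<in> D" and \<alpha>: "set \<alpha> \<subseteq> {1..n}"
    and pos: "\<forall>k. m k > 0" and m0: "m 0 = 1"
    and A1: "\<forall>p\<ge>1. (m p)\<^sup>2 \<le> m (p - 1) * m (p + 1)"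
    and H: "H \<ge> 1" and A2: "\<forall>p q. m (p + q) \<le> H ^ (p + q) * m p * m q"
    and L: "L \<ge> 1" and A3: "\<forall>p\<ge>1. real p * m (p - 1) \<le> L * m p"
    and C: "C > 0" and A: "A \<ge> 1"
    and lower_bound: "\<And>\<beta>. set \<beta> \<subseteq> {1..n-1} \<Longrightarrow> norm (opword X \<beta> u) \<le> C * A ^ length \<beta> * m (length \<beta>)"
    and single_bound: "\<And>k. norm ((X n ^^ k) u) \<le> C * A ^ k * m k"
  shows "norm (opword X \<alpha> u) \<le> C * (exp (\<kappa> * L) * A * H) ^ length \<alpha> * m (length \<alpha>)"
proof -
  \<comment> \<open>the rescaled weight absorbs the geometric factors, so \<open>C\<^sup>2\<close> alone carries the size of \<open>u\<close>\<close>
  define mA where "mA j = A ^ j * m j" for j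
  have mA_pos: "\<forall>k. mA k > 0" using pos A by (simp add: mA_def)
  have mA_A3: "\<forall>p\<ge>1. real p * mA (p - 1) \<le> L * mA p"
    using A3_scaled[OF pos A _ A3] L by (simp add: mA_def)
  have ordered: "\<forall>k \<beta>. set \<beta> \<subseteq> {1..n-1} \<longrightarrow>
      cmod (cinner u ((X n ^^ k) (opword X \<beta> u))) \<le> C\<^sup>2 * mA (k + length \<beta>)"
  proof (intro allI impI)
    fix k \<beta> assume \<beta>: "set \<beta> \<subseteq> {1..n-1}"
    have "cmod (cinner u ((X n ^^ k) (opword X \<beta> u))) \<le> norm ((X n ^^ k) u) * norm (opword X \<beta> u)"
      using cinner_funpow_opword_le[OF herm u n_in lower_word_subset[OF \<beta>]] .
    also have "\<dots> \<le> (C * mA k) * (C * mA (length \<beta>))"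
      using single_bound lower_bound[OF \<beta>] mA_pos C
      by (intro mult_mono) (auto simp: mA_def mult.assoc intro: less_imp_le)
    also have "\<dots> \<le> C\<^sup>2 * mA (k + length \<beta>)"
      using log_convex_mult_le[OF pos A1 m0, of k "length \<beta>"] A C
      by (simp add: mA_def power2_eq_square power_add mult_left_mono mult_ac)
    finally show "cmod (cinner u ((X n ^^ k) (opword X \<beta> u))) \<le> C\<^sup>2 * mA (k + length \<beta>)" .
  qed
  define N where "N = length \<alpha>"
  define B where "B = exp (\<kappa> * L) * A * H"
  have "(norm (opword X \<alpha> u))\<^sup>2 \<le> C\<^sup>2 * (exp (\<kappa> * L) ^ (N + N) * (A ^ (N + N) * m (N + N)))"
    using norm_opword_sq_le[OF herm u \<alpha> mA_pos L mA_A3 ordered]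
    by (simp add: N_def mA_def mult_2)
  also have "\<dots> \<le> C\<^sup>2 * (exp (\<kappa> * L) ^ (N + N) * (A ^ (N + N) * (H ^ (N + N) * m N * m N)))"
    using A2 A by (intro mult_left_mono) auto
  also have "\<dots> = (C * B ^ N * m N)\<^sup>2"
    by (simp add: B_def power2_eq_square power_mult_distrib power_add mult_ac)
  finally have "(norm (opword X \<alpha> u))\<^sup>2 \<le> (C * B ^ N * m N)\<^sup>2" .
  moreover have "0 \<le> C * B ^ N * m N"
    using C A H pos[rule_format, of N] by (simp add: B_def)
  ultimately show ?thesis
    unfolding N_def B_def by (rule power2_le_imp_le)
qed

lemma S_class_if_S_class_lower_S_single:
  fixes m :: "nat \<Rightarrow> real"
  assumes herm: "\<forall>j\<in>{1..n}. hermitian_on D (X j) \<or> skew_hermitian_on D (X j)"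
    and u: "u \<in> D"
    and lower: "u \<in> S_class (n - 1) X (\<lambda>_. m)" and single: "u \<in> S_single (X n) m"
    and pos: "\<forall>k. m k > 0" and m0: "m 0 = 1"
    and A1: "\<forall>p\<ge>1. (m p)\<^sup>2 \<le> m (p - 1) * m (p + 1)"
    and H: "H \<ge> 1" and A2: "\<forall>p q. m (p + q) \<le> H ^ (p + q) * m p * m q"
    and L: "L \<ge> 1" and A3: "\<forall>p\<ge>1. real p * m (p - 1) \<le> L * m p"
  shows "u \<in> S_class n X (\<lambda>_. m)"
proof -
  obtain C1 A1 where C1: "C1 > 0" "A1 > 0" and lower_bound:
    "\<And>\<beta>. set \<beta> \<subseteq> {1..n-1} \<Longrightarrow> norm (opword X \<beta> u) \<le> C1 * A1 ^ length \<beta> * m (length \<beta>)"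
    using S_class_length_bound[OF lower pos A1 m0] by blast
  obtain C2 A2 where C2: "C2 > 0" "A2 > 0" and single_bound:
    "\<And>k. norm ((X n ^^ k) u) \<le> C2 * A2 ^ k * m k"
    using S_single_funpow_bound[OF single pos m0] by blast
  define A where "A = max 1 (max A1 A2)"
  define C where "C = max C1 C2"
  have A: "A \<ge> 1" and C: "C > 0" using C1 by (auto simp: A_def C_def)
  have weaken: "C' * A' ^ k * m k \<le> C * A ^ k * m k" if "0 < C'" "C' \<le> C" "0 < A'" "A' \<le> A" for C' A' k
    using that pos by (simp add: mult_mono power_mono less_imp_le)
  have "norm (opword X \<alpha> u) \<le> C * (exp (\<kappa> * L) * A * H) ^ length \<alpha> * m (length \<alpha>)"
    if "set \<alpha> \<subseteq> {1..n}" for \<alpha>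
    using norm_opword_le_of_ordered_bounds[OF herm u that pos m0 A1 H A2 L A3 C A]
      order.trans[OF lower_bound weaken] order.trans[OF single_bound weaken] C1 C2
    by (simp add: A_def C_def)
  moreover have "exp (\<kappa> * L) * A * H > 0" using A H by (intro mult_pos_pos) auto
  ultimately show ?thesis
    by (rule S_class_of_length_bound[OF _ C _ pos H A2 m0])
qed

end

theorem proposition3p3:
  fixes X :: "nat \<Rightarrow> 'a::chilbert_space \<Rightarrow> 'a"
    and D :: "'a set"
    and m :: "nat \<Rightarrow> real"
    and n :: nat
    and u :: 'a
  assumes n_ge: "n \<ge> 2"
    and D_sub: "complex_subspace D"
    and lin: "\<forall>j\<in>{1..n}. linear_on D (X j)"
    and herm: "\<forall>j\<in>{1..n}. hermitian_on D (X j) \<or> skew_hermitian_on D (X j)"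
    and inv: "\<forall>j\<in>{1..n}. \<forall>x\<in>D. X j x \<in> D"
    and m_pos: "\<forall>k. m k > 0"
    and A0: "m 0 = 1 \<and> m 1 = 1"
    and A1: "\<forall>p\<ge>1. (m p)\<^sup>2 \<le> m (p - 1) * m (p + 1)"
    and A2: "\<exists>H>0. \<forall>p q. m (p + q) \<le> H ^ (p + q) * m p * m q"
    and A3': "\<exists>L\<ge>1. \<forall>p\<ge>1. real p * m (p - 1) \<le> L * m p"
    and comm: "\<forall>j\<in>{1..n-1}. \<exists>c :: nat \<Rightarrow> complex. \<forall>x\<in>D.
                 X j (X n x) - X n (X j x) = (\<Sum>k=1..n. c k *\<^sub>C X k x)"
    and uD: "u \<in> D"
  shows "u \<in> S_class n X (\<lambda>_. m) \<longleftrightarrow>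
           u \<in> S_class (n - 1) X (\<lambda>_. m) \<inter> S_single (X n) m"
proof -
  obtain coeff where "\<forall>j\<in>{1..n-1}. \<forall>x\<in>D. X j (X n x) - X n (X j x) = (\<Sum>k=1..n. coeff j k *\<^sub>C X k x)"
    using bchoice[OF comm] by blast
  then interpret commutator_closed X D n coeff
    using n_ge D_sub lin inv by unfold_locales auto
  have m0: "m 0 = 1" using A0 by simp
  obtain H where H: "H \<ge> 1" "\<forall>p q. m (p + q) \<le> H ^ (p + q) * m p * m q"
    using moderate_growth_one_le[OF m_pos A2] by blast
  obtain L where L: "L \<ge> 1" "\<forall>p\<ge>1. real p * m (p - 1) \<le> L * m p" using A3' by blast
  have n: "Suc (n - 1) = n" using n_ge by simp
  show ?thesis
  proof
    assume "u \<in> S_class n X (\<lambda>_. m)"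
    then show "u \<in> S_class (n - 1) X (\<lambda>_. m) \<inter> S_single (X n) m"
      using S_class_imp_S_class_pred[of u "n - 1" X m] S_class_imp_S_single[of u n X m n] n n_in m0
      by simp
  next
    assume "u \<in> S_class (n - 1) X (\<lambda>_. m) \<inter> S_single (X n) m"
    then show "u \<in> S_class n X (\<lambda>_. m)"
      by (intro S_class_if_S_class_lower_S_single[OF herm uD _ _ m_pos m0 A1 H L]) auto
  qed
qed

end
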